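(* Let $(X,Y)$ be distributed according to an $(\alpha,\lambda)$-locally consistent RBM with $\alpha>0$. Then for every observed node $u$, the two-hop Markov neighborhood of $u$ equals $N_2(u)\setminus\{u\}$.
   Context: A Restricted Boltzmann Machine (RBM) with $n$ observed variables $X\in\{\pm1\}^n$ (indexed by $V_{obs}=[n]$) and $m$ latent variables $Y\in\{\pm1\}^m$ (indexed by $V_{lat}=[m]$) is the distribution $\Pr[X=x,Y=y]=\frac1Z\exp(x^TJy+h^Tx+g^Ty)$, where $J\in\mathbb R^{n\times m}$, $h\in\mathbb R^n$, $g\in\mathbb R^m$ are arbitrary and $Z$ is the normalizing constant. Its edge set is $E=\{(i,j):J_{ij}\neq0\}$. The RBM is $(\alpha,\lambda)$-locally consistent if: (i) for each $j\in[m]$, either $J_{ij}\ge0$ for all $i$ or $J_{ij}\le0$ for all $i$; (ii) $|J_{ij}|\ge\alpha$ for every $(i,j)\in E$; (iii) $\sum_j|J_{ij}|+|h_i|\le\lambda$ for all $i\in[n]$; (iv) $\sum_i|J_{ij}|+|g_j|\le\lambda$ for all $j\in[m]$. $N_2(u)=\{i\in V_{obs}:\exists j\in[m],\ J_{ij}\ne0,\ J_{uj}\neq0\}$. The two-hop Markov neighborhood of $u$ is the smallest set $S\subseteq V_{obs}\setminus\{u\}$ such that, conditioned on $X_S$, $X_u$ is independent of $X_v$ for every $v\in V_{obs}\setminus(S\cup\{u\})$. *)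

theory Defs
  imports Complex_Main
begin

text \<open>Observed nodes are indexed by {..<n}, latent nodes by {..<m} (0-based).
  Spin configurations are functions nat => real with values in {-1,1}
  on the index range and 0 outside (canonical representatives).\<close>

definition spins :: "nat \<Rightarrow> (nat \<Rightarrow> real) set" where
  "spins k = {x. (\<forall>i<k. x i = -1 \<or> x i = 1) \<and> (\<forall>i\<ge>k. x i = 0)}"

definition rbm_weight ::
  "nat \<Rightarrow> nat \<Rightarrow> (nat \<Rightarrow> nat \<Rightarrow> real) \<Rightarrow> (nat \<Rightarrow> real) \<Rightarrow> (nat \<Rightarrow> real)
   \<Rightarrow> (nat \<Rightarrow> real) \<Rightarrow> (nat \<Rightarrow> real) \<Rightarrow> real" where
  "rbm_weight n m J h g x y =
     exp ((\<Sum>i<n. \<Sum>j<m. x i * J i j * y j) + (\<Sum>i<n. h i * x i) + (\<Sum>j<m. g j * y j))"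

definition rbm_Z ::
  "nat \<Rightarrow> nat \<Rightarrow> (nat \<Rightarrow> nat \<Rightarrow> real) \<Rightarrow> (nat \<Rightarrow> real) \<Rightarrow> (nat \<Rightarrow> real) \<Rightarrow> real" where
  "rbm_Z n m J h g = (\<Sum>x\<in>spins n. \<Sum>y\<in>spins m. rbm_weight n m J h g x y)"

definition obs_marg ::
  "nat \<Rightarrow> nat \<Rightarrow> (nat \<Rightarrow> nat \<Rightarrow> real) \<Rightarrow> (nat \<Rightarrow> real) \<Rightarrow> (nat \<Rightarrow> real)
   \<Rightarrow> nat set \<Rightarrow> (nat \<Rightarrow> real) \<Rightarrow> real" where
  "obs_marg n m J h g A a =
     (\<Sum>x\<in>{x\<in>spins n. \<forall>i\<in>A. x i = a i}. \<Sum>y\<in>spins m. rbm_weight n m J h g x y)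
       / rbm_Z n m J h g"

definition obs_cond_indep ::
  "nat \<Rightarrow> nat \<Rightarrow> (nat \<Rightarrow> nat \<Rightarrow> real) \<Rightarrow> (nat \<Rightarrow> real) \<Rightarrow> (nat \<Rightarrow> real)
   \<Rightarrow> nat \<Rightarrow> nat \<Rightarrow> nat set \<Rightarrow> bool" where
  "obs_cond_indep n m J h g u v S =
     (\<forall>x\<in>spins n.
        obs_marg n m J h g (insert u (insert v S)) x * obs_marg n m J h g S x =
        obs_marg n m J h g (insert u S) x * obs_marg n m J h g (insert v S) x)"

definition markov_separating ::
  "nat \<Rightarrow> nat \<Rightarrow> (nat \<Rightarrow> nat \<Rightarrow> real) \<Rightarrow> (nat \<Rightarrow> real) \<Rightarrow> (nat \<Rightarrow> real)
   \<Rightarrow> nat \<Rightarrow> nat set \<Rightarrow> bool" where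
  "markov_separating n m J h g u S =
     (S \<subseteq> {..<n} - {u} \<and>
      (\<forall>v\<in>{..<n} - (S \<union> {u}). obs_cond_indep n m J h g u v S))"

definition is_two_hop_markov_nbhd ::
  "nat \<Rightarrow> nat \<Rightarrow> (nat \<Rightarrow> nat \<Rightarrow> real) \<Rightarrow> (nat \<Rightarrow> real) \<Rightarrow> (nat \<Rightarrow> real)
   \<Rightarrow> nat \<Rightarrow> nat set \<Rightarrow> bool" where
  "is_two_hop_markov_nbhd n m J h g u S =
     (markov_separating n m J h g u S \<and>
      (\<forall>S'. markov_separating n m J h g u S' \<longrightarrow> S \<subseteq> S'))"

definition N2 :: "nat \<Rightarrow> nat \<Rightarrow> (nat \<Rightarrow> nat \<Rightarrow> real) \<Rightarrow> nat \<Rightarrow> nat set" where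
  "N2 n m J u = {i. i < n \<and> (\<exists>j<m. J i j \<noteq> 0 \<and> J u j \<noteq> 0)}"

definition locally_consistent ::
  "nat \<Rightarrow> nat \<Rightarrow> (nat \<Rightarrow> nat \<Rightarrow> real) \<Rightarrow> (nat \<Rightarrow> real) \<Rightarrow> (nat \<Rightarrow> real)
   \<Rightarrow> real \<Rightarrow> real \<Rightarrow> bool" where
  "locally_consistent n m J h g \<alpha> lam =
     ((\<forall>j<m. (\<forall>i<n. J i j \<ge> 0) \<or> (\<forall>i<n. J i j \<le> 0)) \<and>
      (\<forall>i<n. \<forall>j<m. J i j \<noteq> 0 \<longrightarrow> \<bar>J i j\<bar> \<ge> \<alpha>) \<and>
      (\<forall>i<n. (\<Sum>j<m. \<bar>J i j\<bar>) + \<bar>h i\<bar> \<le> lam) \<and>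
      (\<forall>j<m. (\<Sum>i<n. \<bar>J i j\<bar>) + \<bar>g j\<bar> \<le> lam))"

end

theory Submission
  imports Defs
begin

text \<open>Summing out the latent layer leaves the observed weight
  \<open>\<Phi> x = exp (\<Sum>i. h i * x i) * (\<Prod>j. 2 * cosh (c j x))\<close> with \<open>c j x = (\<Sum>i. x i * J i j) + g j\<close>.
  The factors involving \<open>x u\<close> involve only coordinates in \<open>N2(u)\<close>, so \<open>\<Phi> = a * b\<close> where \<open>a\<close>
  depends only on \<open>x u\<close> and the coordinates in \<open>N2(u)\<close>, and \<open>b\<close> does not depend on \<open>x u\<close>.
  Summing out further coordinates keeps this form, which amounts to conditional independence
  given \<open>N2(u) - {u}\<close>.
  Conversely, as every column of \<open>J\<close> has a constant sign, each \<open>cosh (c j x)\<close> is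
  log-supermodular on the lattice of spin configurations, strictly so in the pair \<open>(x u, x w)\<close>
  when \<open>u\<close> and \<open>w\<close> share a latent neighbour \<open>j\<close>. Summing out a coordinate preserves both
  properties (the four functions theorem on \<open>{-1 < 1}\<close>), so every marginal of \<open>(X u, X w, X S)\<close>
  has odds ratio \<open>> 1\<close> in \<open>(x u, x w)\<close>, and no separating set can omit such a \<open>w\<close>.\<close>

section \<open>Summing out spins\<close>

definition spin_fibre :: "nat set \<Rightarrow> (nat \<Rightarrow> real) \<Rightarrow> (nat \<Rightarrow> real) set" where
  "spin_fibre F z = {x. (\<forall>i\<in>F. x i = 1 \<or> x i = -1) \<and> (\<forall>i. i \<notin> F \<longrightarrow> x i = z i)}"

definition sum_out :: "nat set \<Rightarrow> ((nat \<Rightarrow> real) \<Rightarrow> real) \<Rightarrow> (nat \<Rightarrow> real) \<Rightarrow> real" where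
  "sum_out F \<phi> z = (\<Sum>x\<in>spin_fibre F z. \<phi> x)"

definition sum_out1 :: "nat \<Rightarrow> ((nat \<Rightarrow> real) \<Rightarrow> real) \<Rightarrow> (nat \<Rightarrow> real) \<Rightarrow> real" where
  "sum_out1 k \<phi> z = \<phi> (z(k := 1)) + \<phi> (z(k := -1))"

lemma spin_fibre_empty [simp]: "spin_fibre {} z = {z}"
  by (auto simp: spin_fibre_def)

lemma spin_fibre_insert:
  assumes "k \<notin> F"
  shows "spin_fibre (insert k F) z = spin_fibre F (z(k := 1)) \<union> spin_fibre F (z(k := -1))"
  using assms by (auto simp: spin_fibre_def)

lemma spin_fibre_insert_disjoint:
  assumes "k \<notin> F"
  shows "spin_fibre F (z(k := 1)) \<inter> spin_fibre F (z(k := -1)) = {}"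
  using assms by (auto simp: spin_fibre_def)

lemma finite_spin_fibre: "finite F \<Longrightarrow> finite (spin_fibre F z)"
  by (induction F arbitrary: z rule: finite_induct) (simp_all add: spin_fibre_insert)

lemma sum_out_empty [simp]: "sum_out {} \<phi> = \<phi>"
  by (simp add: sum_out_def fun_eq_iff)

lemma sum_out_insert:
  assumes "finite F" "k \<notin> F"
  shows "sum_out (insert k F) \<phi> = sum_out1 k (sum_out F \<phi>)"
  using assms
  by (simp add: fun_eq_iff sum_out_def sum_out1_def spin_fibre_insert spin_fibre_insert_disjoint
      finite_spin_fibre sum.union_disjoint)

lemma sum_out_pos:
  assumes "finite F" "\<And>x. 0 < \<phi> x"
  shows "0 < sum_out F \<phi> z"
  using assms by (induction F arbitrary: z rule: finite_induct)
    (simp_all add: sum_out_insert sum_out1_def add_pos_pos)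

section \<open>Log-supermodularity\<close>

definition log_supermodular :: "((nat \<Rightarrow> real) \<Rightarrow> real) \<Rightarrow> bool" where
  "log_supermodular \<phi> \<longleftrightarrow> (\<forall>x y. \<phi> x * \<phi> y \<le> \<phi> (sup x y) * \<phi> (inf x y))"

definition strictly_log_supermodular_at :: "nat \<Rightarrow> nat \<Rightarrow> ((nat \<Rightarrow> real) \<Rightarrow> real) \<Rightarrow> bool" where
  "strictly_log_supermodular_at u v \<phi> \<longleftrightarrow>
     (\<forall>x y. x u = 1 \<longrightarrow> x v = -1 \<longrightarrow> y u = -1 \<longrightarrow> y v = 1 \<longrightarrow>
        \<phi> x * \<phi> y < \<phi> (sup x y) * \<phi> (inf x y))"

lemma sup_fun_upd: "sup (f(k := a)) (g(k := b)) = (sup f g)(k := sup a b)"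
  by (simp add: fun_eq_iff)

lemma inf_fun_upd: "inf (f(k := a)) (g(k := b)) = (inf f g)(k := inf a b)"
  by (simp add: fun_eq_iff)

text \<open>The mixed terms of the four functions inequality on the two-point lattice \<open>{-1 < 1}\<close>;
  index \<open>1\<close> stands for the spin \<open>1\<close> and index \<open>0\<close> for the spin \<open>-1\<close>.\<close>

lemma four_functions_two_point:
  fixes a1 a0 b1 b0 c1 c0 d1 d0 :: real
  assumes pos: "0 < a1" "0 < a0" "0 < b1" "0 < b0" "0 < c1" "0 < c0" "0 < d1" "0 < d0"
    and top: "a1 * b1 \<le> c1 * d1" and bot: "a0 * b0 \<le> c0 * d0"
    and mixed: "a1 * b0 \<le> c1 * d0" "a0 * b1 \<le> c1 * d0"
  shows "a1 * b0 + a0 * b1 \<le> c1 * d0 + c0 * d1"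
proof -
  have "(a1 * b0) * (a0 * b1) = (a1 * b1) * (a0 * b0)" by (simp add: ac_simps)
  also have "\<dots> \<le> (c1 * d1) * (c0 * d0)"
    using mult_mono[OF top bot] pos by simp
  finally have cross: "(a1 * b0) * (a0 * b1) \<le> (c1 * d0) * (c0 * d1)" by (simp add: ac_simps)
  have "0 \<le> (c1 * d0 - a1 * b0) * (c1 * d0 - a0 * b1)"
    using mixed by simp
  with cross have "(c1 * d0) * (a1 * b0 + a0 * b1) \<le> (c1 * d0) * (c1 * d0 + c0 * d1)"
    by (simp add: algebra_simps)
  then show ?thesis using pos by simp
qed

lemma sum_out1_le:
  assumes pos: "\<And>x. 0 < \<phi> x" and lsm: "log_supermodular \<phi>"
  shows "sum_out1 k \<phi> z * sum_out1 k \<phi> z' \<le> sum_out1 k \<phi> (sup z z') * sum_out1 k \<phi> (inf z z')"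
    and "\<phi> (z(k := 1)) * \<phi> (z'(k := 1)) < \<phi> ((sup z z')(k := 1)) * \<phi> ((inf z z')(k := 1)) \<Longrightarrow>
      sum_out1 k \<phi> z * sum_out1 k \<phi> z' < sum_out1 k \<phi> (sup z z') * sum_out1 k \<phi> (inf z z')"
proof -
  have step: "\<phi> (z(k := a)) * \<phi> (z'(k := b))
      \<le> \<phi> ((sup z z')(k := sup a b)) * \<phi> ((inf z z')(k := inf a b))" for a b
    using lsm unfolding log_supermodular_def by (metis sup_fun_upd inf_fun_upd)
  have "\<phi> (z(k := 1)) * \<phi> (z'(k := -1)) + \<phi> (z(k := -1)) * \<phi> (z'(k := 1))
      \<le> \<phi> ((sup z z')(k := 1)) * \<phi> ((inf z z')(k := -1))
        + \<phi> ((sup z z')(k := -1)) * \<phi> ((inf z z')(k := 1))"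
    using step[of 1 1] step[of "-1" "-1"] step[of 1 "-1"] step[of "-1" 1]
    by (intro four_functions_two_point pos) (simp_all add: sup_real_def inf_real_def)
  moreover have "\<phi> (z(k := -1)) * \<phi> (z'(k := -1)) \<le> \<phi> ((sup z z')(k := -1)) * \<phi> ((inf z z')(k := -1))"
    using step[of "-1" "-1"] by simp
  moreover have "\<phi> (z(k := 1)) * \<phi> (z'(k := 1)) \<le> \<phi> ((sup z z')(k := 1)) * \<phi> ((inf z z')(k := 1))"
    using step[of 1 1] by simp
  ultimately show "sum_out1 k \<phi> z * sum_out1 k \<phi> z' \<le> sum_out1 k \<phi> (sup z z') * sum_out1 k \<phi> (inf z z')"
    and "\<phi> (z(k := 1)) * \<phi> (z'(k := 1)) < \<phi> ((sup z z')(k := 1)) * \<phi> ((inf z z')(k := 1)) \<Longrightarrow>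
      sum_out1 k \<phi> z * sum_out1 k \<phi> z' < sum_out1 k \<phi> (sup z z') * sum_out1 k \<phi> (inf z z')"
    by (simp_all add: sum_out1_def algebra_simps)
qed

lemma log_supermodular_sum_out:
  assumes "finite F" "\<And>x. 0 < \<phi> x" "log_supermodular \<phi>"
  shows "log_supermodular (sum_out F \<phi>)"
  using assms
proof (induction F rule: finite_induct)
  case (insert k F)
  then show ?case
    using sum_out1_le(1)[of "sum_out F \<phi>"] sum_out_pos
    by (simp add: sum_out_insert log_supermodular_def)
qed simp

lemma strictly_log_supermodular_at_sum_out:
  assumes "finite F" "\<And>x. 0 < \<phi> x" "log_supermodular \<phi>" "strictly_log_supermodular_at u v \<phi>"
    and "u \<notin> F" "v \<notin> F"
  shows "strictly_log_supermodular_at u v (sum_out F \<phi>)"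
  using assms
proof (induction F rule: finite_induct)
  case (insert k F)
  show ?case
    unfolding strictly_log_supermodular_at_def sum_out_insert[OF insert.hyps]
  proof (intro allI impI)
    fix x y :: "nat \<Rightarrow> real"
    assume "x u = 1" "x v = -1" "y u = -1" "y v = 1"
    moreover have "strictly_log_supermodular_at u v (sum_out F \<phi>)"
      using insert by simp
    ultimately have "sum_out F \<phi> (x(k := 1)) * sum_out F \<phi> (y(k := 1))
        < sum_out F \<phi> (sup (x(k := 1)) (y(k := 1))) * sum_out F \<phi> (inf (x(k := 1)) (y(k := 1)))"
      using insert.prems(4,5) unfolding strictly_log_supermodular_at_def by auto
    then have "sum_out F \<phi> (x(k := 1)) * sum_out F \<phi> (y(k := 1))
        < sum_out F \<phi> ((sup x y)(k := 1)) * sum_out F \<phi> ((inf x y)(k := 1))"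
      by (simp only: sup_fun_upd inf_fun_upd sup.idem inf.idem)
    then show "sum_out1 k (sum_out F \<phi>) x * sum_out1 k (sum_out F \<phi>) y
        < sum_out1 k (sum_out F \<phi>) (sup x y) * sum_out1 k (sum_out F \<phi>) (inf x y)"
      using sum_out1_le(2) insert sum_out_pos log_supermodular_sum_out by blast
  qed
qed simp

lemma strict_odds_ratio:
  assumes "strictly_log_supermodular_at u w \<psi>" "u \<noteq> w" "z u = 1" "z w = 1"
  shows "sum_out1 u \<psi> z * sum_out1 w \<psi> z < \<psi> z * sum_out1 u (sum_out1 w \<psi>) z"
proof -
  have "sup (z(w := -1)) (z(u := -1)) = z" "inf (z(w := -1)) (z(u := -1)) = z(u := -1, w := -1)"
    using assms(2-4) by (auto simp: fun_eq_iff sup_real_def inf_real_def)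
  moreover have "\<psi> (z(w := -1)) * \<psi> (z(u := -1))
      < \<psi> (sup (z(w := -1)) (z(u := -1))) * \<psi> (inf (z(w := -1)) (z(u := -1)))"
    using assms(1-4) unfolding strictly_log_supermodular_at_def by simp
  ultimately have "\<psi> (z(w := -1)) * \<psi> (z(u := -1)) < \<psi> z * \<psi> (z(u := -1, w := -1))"
    by simp
  moreover have "z(u := 1) = z" "z(w := 1) = z" "z(u := 1, w := -1) = z(w := -1)"
    "z(u := -1, w := 1) = z(u := -1)"
    using assms(2-4) by (auto simp: fun_eq_iff)
  ultimately show ?thesis by (simp add: sum_out1_def algebra_simps)
qed

section \<open>Functions of few coordinates\<close>

definition depends_only_on :: "nat set \<Rightarrow> ((nat \<Rightarrow> real) \<Rightarrow> real) \<Rightarrow> bool" where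
  "depends_only_on R \<phi> \<longleftrightarrow> (\<forall>x y. (\<forall>i\<in>R. x i = y i) \<longrightarrow> \<phi> x = \<phi> y)"

lemma depends_only_on_upd: "depends_only_on R \<phi> \<Longrightarrow> k \<notin> R \<Longrightarrow> \<phi> (x(k := s)) = \<phi> x"
  unfolding depends_only_on_def by auto

lemma depends_only_on_mono: "depends_only_on R \<phi> \<Longrightarrow> R \<subseteq> R' \<Longrightarrow> depends_only_on R' \<phi>"
  unfolding depends_only_on_def by blast

lemma depends_only_on_sum_out1:
  assumes "depends_only_on R \<phi>"
  shows "depends_only_on (R - {k}) (sum_out1 k \<phi>)"
  unfolding depends_only_on_def
proof (intro allI impI)
  fix x y :: "nat \<Rightarrow> real"
  assume "\<forall>i\<in>R - {k}. x i = y i"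
  then have "\<phi> (x(k := s)) = \<phi> (y(k := s))" for s
    using assms unfolding depends_only_on_def by simp
  then show "sum_out1 k \<phi> x = sum_out1 k \<phi> y" by (simp add: sum_out1_def)
qed

lemma depends_only_on_sum_out:
  "finite F \<Longrightarrow> depends_only_on R \<phi> \<Longrightarrow> depends_only_on (R - F) (sum_out F \<phi>)"
proof (induction F rule: finite_induct)
  case (insert k F)
  have "R - insert k F = R - F - {k}" by blast
  with insert show ?case
    using depends_only_on_sum_out1[of "R - F" "sum_out F \<phi>" k]
    by (simp only: sum_out_insert[OF insert.hyps])
qed simp

lemma sum_out_mult_left:
  assumes "depends_only_on R a" "R \<inter> F = {}"
  shows "sum_out F (\<lambda>x. a x * b x) z = a z * sum_out F b z"
proof -
  have "a x = a z" if "x \<in> spin_fibre F z" for x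
    using assms that unfolding depends_only_on_def spin_fibre_def by blast
  then show ?thesis by (simp add: sum_out_def sum_distrib_left)
qed

lemma sum_out1_mult_left:
  assumes "depends_only_on (- {k}) a"
  shows "sum_out1 k (\<lambda>x. a x * b x) x = a x * sum_out1 k b x"
  using depends_only_on_upd[OF assms] by (simp add: sum_out1_def distrib_left)

lemma sum_out1_mult_right:
  assumes "depends_only_on (- {k}) b"
  shows "sum_out1 k (\<lambda>x. a x * b x) x = sum_out1 k a x * b x"
  using depends_only_on_upd[OF assms] by (simp add: sum_out1_def distrib_right)

lemma odds_ratio_one_of_factorization:
  assumes "\<And>x. \<psi> x = a x * b x" "depends_only_on (- {v}) a" "depends_only_on (- {u}) b" "u \<noteq> v"
  shows "\<psi> z * sum_out1 u (sum_out1 v \<psi>) z = sum_out1 u \<psi> z * sum_out1 v \<psi> z"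
proof -
  have \<psi>: "\<psi> = (\<lambda>x. a x * b x)" using assms(1) by blast
  have "depends_only_on (- {u}) (sum_out1 v b)"
    using depends_only_on_sum_out1[OF assms(3), of v] assms(4)
    by (auto elim: depends_only_on_mono)
  then have "sum_out1 u (sum_out1 v \<psi>) z = sum_out1 u a z * sum_out1 v b z"
    unfolding \<psi> sum_out1_mult_left[OF assms(2)] by (rule sum_out1_mult_right)
  then show ?thesis
    unfolding \<psi> sum_out1_mult_left[OF assms(2)] sum_out1_mult_right[OF assms(3)]
    by (simp add: ac_simps)
qed

lemma sum_out_prod:
  "finite F \<Longrightarrow> sum_out F (\<lambda>y. \<Prod>j\<in>F. f j (y j)) z = (\<Prod>j\<in>F. f j 1 + f j (-1))"
proof (induction F arbitrary: z rule: finite_induct)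
  case (insert k F)
  have "depends_only_on {k} (\<lambda>y. f k (y k))" by (simp add: depends_only_on_def)
  then have "sum_out F (\<lambda>y. \<Prod>j\<in>insert k F. f j (y j)) z' = f k (z' k) * (\<Prod>j\<in>F. f j 1 + f j (-1))"
    for z'
    using insert by (simp add: sum_out_mult_left)
  with insert show ?case by (simp add: sum_out_insert sum_out1_def distrib_right)
qed simp

section \<open>The observed weight of an RBM\<close>

lemma spins_eq_spin_fibre: "spins k = spin_fibre {..<k} (\<lambda>_. 0)"
  by (auto simp: spins_def spin_fibre_def)

lemma sum_spins_exp_linear: "(\<Sum>y\<in>spins m. exp (\<Sum>j<m. c j * y j)) = (\<Prod>j<m. 2 * cosh (c j))"
proof -
  have "(\<Sum>y\<in>spins m. exp (\<Sum>j<m. c j * y j)) = sum_out {..<m} (\<lambda>y. \<Prod>j<m. exp (c j * y j)) (\<lambda>_. 0)"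
    by (simp add: sum_out_def spins_eq_spin_fibre exp_sum)
  also have "\<dots> = (\<Prod>j<m. exp (c j) + exp (- c j))"
    using sum_out_prod[of "{..<m}" "\<lambda>j s. exp (c j * s)"] by simp
  also have "\<dots> = (\<Prod>j<m. 2 * cosh (c j))"
    by (simp flip: cosh_plus_sinh)
  finally show ?thesis .
qed

definition latent_field ::
    "nat \<Rightarrow> (nat \<Rightarrow> nat \<Rightarrow> real) \<Rightarrow> (nat \<Rightarrow> real) \<Rightarrow> nat \<Rightarrow> (nat \<Rightarrow> real) \<Rightarrow> real"
  where "latent_field n J g j x = (\<Sum>i<n. x i * J i j) + g j"

definition obs_weight :: "nat \<Rightarrow> nat \<Rightarrow> (nat \<Rightarrow> nat \<Rightarrow> real) \<Rightarrow> (nat \<Rightarrow> real) \<Rightarrow> (nat \<Rightarrow> real)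
    \<Rightarrow> (nat \<Rightarrow> real) \<Rightarrow> real"
  where "obs_weight n m J h g x = exp (\<Sum>i<n. h i * x i) * (\<Prod>j<m. 2 * cosh (latent_field n J g j x))"

lemma obs_weight_pos: "0 < obs_weight n m J h g x"
  by (simp add: obs_weight_def prod_pos)

lemma sum_latent_rbm_weight: "(\<Sum>y\<in>spins m. rbm_weight n m J h g x y) = obs_weight n m J h g x"
proof -
  have "(\<Sum>j<m. latent_field n J g j x * y j) = (\<Sum>j<m. \<Sum>i<n. x i * J i j * y j) + (\<Sum>j<m. g j * y j)"
    for y
    by (simp add: latent_field_def distrib_right sum.distrib sum_distrib_right)
  then have "(\<Sum>j<m. latent_field n J g j x * y j) = (\<Sum>i<n. \<Sum>j<m. x i * J i j * y j) + (\<Sum>j<m. g j * y j)"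
    for y
    by (simp add: sum.swap[of _ "{..<m}"])
  then have "rbm_weight n m J h g x y
      = exp (\<Sum>i<n. h i * x i) * exp (\<Sum>j<m. latent_field n J g j x * y j)" for y
    by (simp add: rbm_weight_def exp_add[symmetric] algebra_simps)
  then show ?thesis
    by (simp add: sum_distrib_left[symmetric] sum_spins_exp_linear obs_weight_def)
qed

lemma obs_event_eq_spin_fibre:
  "x \<in> spins n \<Longrightarrow> {x' \<in> spins n. \<forall>i\<in>A. x' i = x i} = spin_fibre ({..<n} - A) x"
  unfolding spins_def spin_fibre_def by (auto 4 3)

lemma obs_marg_eq_sum_out:
  "x \<in> spins n \<Longrightarrow>
    obs_marg n m J h g A x = sum_out ({..<n} - A) (obs_weight n m J h g) x / rbm_Z n m J h g"
  by (simp add: obs_marg_def sum_latent_rbm_weight obs_event_eq_spin_fibre sum_out_def)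

lemma rbm_Z_pos: "0 < rbm_Z n m J h g"
proof -
  have "rbm_Z n m J h g = sum_out {..<n} (obs_weight n m J h g) (\<lambda>_. 0)"
    unfolding rbm_Z_def sum_latent_rbm_weight by (simp add: sum_out_def spins_eq_spin_fibre)
  then show ?thesis by (simp add: sum_out_pos obs_weight_pos)
qed

lemma obs_cond_indep_iff:
  fixes n m :: nat and J :: "nat \<Rightarrow> nat \<Rightarrow> real" and h g :: "nat \<Rightarrow> real"
  assumes "u < n" "v < n" "u \<noteq> v" "S \<subseteq> {..<n}" "u \<notin> S" "v \<notin> S"
  defines "\<Psi> \<equiv> sum_out ({..<n} - insert u (insert v S)) (obs_weight n m J h g)"
  shows "obs_cond_indep n m J h g u v S \<longleftrightarrow>
    (\<forall>x\<in>spins n. \<Psi> x * sum_out1 u (sum_out1 v \<Psi>) x = sum_out1 u \<Psi> x * sum_out1 v \<Psi> x)"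
proof -
  define W where "W = {..<n} - insert u (insert v S)"
  have W: "finite W" "u \<notin> W" "v \<notin> W" by (auto simp: W_def)
  have "{..<n} - S = insert u (insert v W)" "{..<n} - insert u S = insert v W"
    "{..<n} - insert v S = insert u W"
    using assms(1-6) by (auto simp: W_def)
  then have marg: "obs_marg n m J h g (insert u (insert v S)) x = \<Psi> x / rbm_Z n m J h g"
    "obs_marg n m J h g S x = sum_out1 u (sum_out1 v \<Psi>) x / rbm_Z n m J h g"
    "obs_marg n m J h g (insert u S) x = sum_out1 v \<Psi> x / rbm_Z n m J h g"
    "obs_marg n m J h g (insert v S) x = sum_out1 u \<Psi> x / rbm_Z n m J h g"
    if "x \<in> spins n" for x
    using W that assms(3) by (simp_all add: obs_marg_eq_sum_out \<Psi>_def W_def[symmetric] sum_out_insert)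
  have "rbm_Z n m J h g \<noteq> 0" using rbm_Z_pos by (rule less_imp_neq[symmetric])
  then show ?thesis
    unfolding obs_cond_indep_def by (simp add: marg mult.commute[of "sum_out1 v \<Psi> _"])
qed

lemma sup_plus_inf_real: "sup s t + inf s t = s + (t :: real)"
  by (simp add: sup_real_def inf_real_def)

lemma sup_minus_inf_real: "sup s t - inf s t = \<bar>s - (t :: real)\<bar>"
  by (simp add: sup_real_def inf_real_def)

lemma sum_mult_sup_inf:
  fixes x y :: "nat \<Rightarrow> real"
  shows "(\<Sum>i\<in>I. a i * x i) + (\<Sum>i\<in>I. a i * y i)
    = (\<Sum>i\<in>I. a i * sup (x i) (y i)) + (\<Sum>i\<in>I. a i * inf (x i) (y i))"
  by (simp add: sum.distrib[symmetric] distrib_left[symmetric] sup_plus_inf_real)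

lemma sum_mult_sup_minus_inf:
  fixes x y :: "nat \<Rightarrow> real"
  shows "(\<Sum>i\<in>I. a i * sup (x i) (y i)) - (\<Sum>i\<in>I. a i * inf (x i) (y i)) = (\<Sum>i\<in>I. a i * \<bar>x i - y i\<bar>)"
  by (simp add: sum_subtractf[symmetric] right_diff_distrib[symmetric] sup_minus_inf_real)

lemma abs_diff_sum_mult_le:
  fixes x y :: "nat \<Rightarrow> real"
  assumes "\<And>i. i \<in> I \<Longrightarrow> 0 \<le> a i"
  shows "\<bar>(\<Sum>i\<in>I. a i * x i) - (\<Sum>i\<in>I. a i * y i)\<bar>
    \<le> (\<Sum>i\<in>I. a i * sup (x i) (y i)) - (\<Sum>i\<in>I. a i * inf (x i) (y i))"
proof -
  have "\<bar>\<Sum>i\<in>I. a i * (x i - y i)\<bar> \<le> (\<Sum>i\<in>I. \<bar>a i * (x i - y i)\<bar>)"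
    by (rule sum_abs)
  also have "\<dots> = (\<Sum>i\<in>I. a i * \<bar>x i - y i\<bar>)"
    using assms by (simp add: abs_mult)
  finally show ?thesis
    unfolding sum_mult_sup_minus_inf by (simp add: sum_subtractf right_diff_distrib)
qed

lemma abs_diff_sum_mult_less:
  fixes x y :: "nat \<Rightarrow> real"
  assumes "finite I" "\<And>i. i \<in> I \<Longrightarrow> 0 \<le> a i" "u \<in> I" "v \<in> I" "0 < a u" "0 < a v"
    and "x u = 1" "x v = -1" "y u = -1" "y v = 1"
  shows "\<bar>(\<Sum>i\<in>I. a i * x i) - (\<Sum>i\<in>I. a i * y i)\<bar>
    < (\<Sum>i\<in>I. a i * sup (x i) (y i)) - (\<Sum>i\<in>I. a i * inf (x i) (y i))"
proof -
  have "0 < a v * (\<bar>x v - y v\<bar> - (x v - y v))" "0 < a u * (\<bar>x u - y u\<bar> + (x u - y u))"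
    using assms by simp_all
  moreover have "a v * (\<bar>x v - y v\<bar> - (x v - y v)) \<le> (\<Sum>i\<in>I. a i * (\<bar>x i - y i\<bar> - (x i - y i)))"
    "a u * (\<bar>x u - y u\<bar> + (x u - y u)) \<le> (\<Sum>i\<in>I. a i * (\<bar>x i - y i\<bar> + (x i - y i)))"
    using assms by (intro member_le_sum; simp)+
  ultimately show ?thesis
    unfolding sum_mult_sup_minus_inf by (simp add: abs_less_iff algebra_simps sum_subtractf sum.distrib)
qed

lemma cosh_mult_cosh: "cosh p * cosh q = (cosh (p + q) + cosh (p - q)) / 2" for p q :: real
  by (simp add: cosh_add cosh_diff)

lemma cosh_mult_le:
  fixes p q P R :: real
  assumes "p + q = P + R" "\<bar>p - q\<bar> \<le> P - R"
  shows "cosh p * cosh q \<le> cosh P * cosh R"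
proof -
  have "cosh (p - q) \<le> cosh (P - R)"
    using assms cosh_real_nonneg_le_iff[of "\<bar>p - q\<bar>" "P - R"] by simp
  with assms show ?thesis by (simp add: cosh_mult_cosh)
qed

lemma cosh_mult_less:
  fixes p q P R :: real
  assumes "p + q = P + R" "\<bar>p - q\<bar> < P - R"
  shows "cosh p * cosh q < cosh P * cosh R"
proof -
  have "cosh (p - q) < cosh (P - R)"
    using assms cosh_real_strict_mono[of "\<bar>p - q\<bar>" "P - R"] by simp
  with assms show ?thesis by (simp add: cosh_mult_cosh)
qed

lemma cosh_latent_field_abs:
  assumes "(\<forall>i<n. 0 \<le> J i j) \<or> (\<forall>i<n. J i j \<le> 0)"
  obtains b where "\<And>x. cosh (latent_field n J g j x) = cosh ((\<Sum>i<n. \<bar>J i j\<bar> * x i) + b)"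
  using assms
proof
  assume "\<forall>i<n. 0 \<le> J i j"
  then show ?thesis
    by (intro that[of "g j"]) (simp add: latent_field_def mult.commute)
next
  assume "\<forall>i<n. J i j \<le> 0"
  then have "(\<Sum>i<n. \<bar>J i j\<bar> * x i) - g j = - latent_field n J g j x" for x
    by (simp add: latent_field_def sum_negf[symmetric] mult.commute)
  then show ?thesis
    by (intro that[of "- g j"]) (metis cosh_minus diff_conv_add_uminus)
qed

lemma cosh_latent_field_le:
  assumes "(\<forall>i<n. 0 \<le> J i j) \<or> (\<forall>i<n. J i j \<le> 0)"
  shows "cosh (latent_field n J g j x) * cosh (latent_field n J g j y)
    \<le> cosh (latent_field n J g j (sup x y)) * cosh (latent_field n J g j (inf x y))"
proof -
  obtain b where eq: "\<And>x. cosh (latent_field n J g j x) = cosh ((\<Sum>i<n. \<bar>J i j\<bar> * x i) + b)"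
    using cosh_latent_field_abs[of n J j g] assms by blast
  show ?thesis
    unfolding eq sup_apply inf_apply
    using sum_mult_sup_inf[where a = "\<lambda>i. \<bar>J i j\<bar>" and I = "{..<n}" and x = x and y = y]
      abs_diff_sum_mult_le[where a = "\<lambda>i. \<bar>J i j\<bar>" and I = "{..<n}" and x = x and y = y]
    by (intro cosh_mult_le) simp_all
qed

lemma cosh_latent_field_less:
  assumes "(\<forall>i<n. 0 \<le> J i j) \<or> (\<forall>i<n. J i j \<le> 0)"
    and "u < n" "v < n" "J u j \<noteq> 0" "J v j \<noteq> 0" "x u = 1" "x v = -1" "y u = -1" "y v = 1"
  shows "cosh (latent_field n J g j x) * cosh (latent_field n J g j y)
    < cosh (latent_field n J g j (sup x y)) * cosh (latent_field n J g j (inf x y))"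
proof -
  obtain b where eq: "\<And>x. cosh (latent_field n J g j x) = cosh ((\<Sum>i<n. \<bar>J i j\<bar> * x i) + b)"
    using cosh_latent_field_abs[of n J j g] assms(1) by blast
  have "\<bar>(\<Sum>i<n. \<bar>J i j\<bar> * x i) - (\<Sum>i<n. \<bar>J i j\<bar> * y i)\<bar>
      < (\<Sum>i<n. \<bar>J i j\<bar> * sup (x i) (y i)) - (\<Sum>i<n. \<bar>J i j\<bar> * inf (x i) (y i))"
    using assms by (intro abs_diff_sum_mult_less) auto
  then show ?thesis
    unfolding eq sup_apply inf_apply
    using sum_mult_sup_inf[where a = "\<lambda>i. \<bar>J i j\<bar>" and I = "{..<n}" and x = x and y = y]
    by (intro cosh_mult_less) simp_all
qed

lemma obs_weight_mult:
  "obs_weight n m J h g x * obs_weight n m J h g y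
    = exp ((\<Sum>i<n. h i * x i) + (\<Sum>i<n. h i * y i))
      * (\<Prod>j<m. 4 * (cosh (latent_field n J g j x) * cosh (latent_field n J g j y)))"
  by (simp add: obs_weight_def exp_add prod.distrib[symmetric] ac_simps)

lemma obs_weight_log_supermodular:
  assumes "\<And>j. j < m \<Longrightarrow> (\<forall>i<n. 0 \<le> J i j) \<or> (\<forall>i<n. J i j \<le> 0)"
  shows "log_supermodular (obs_weight n m J h g)"
  unfolding log_supermodular_def
proof (intro allI)
  fix x y :: "nat \<Rightarrow> real"
  have h_sum: "(\<Sum>i<n. h i * x i) + (\<Sum>i<n. h i * y i)
      = (\<Sum>i<n. h i * sup x y i) + (\<Sum>i<n. h i * inf x y i)"
    using sum_mult_sup_inf[where a = h and I = "{..<n}" and x = x and y = y] by simp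
  have "(\<Prod>j<m. 4 * (cosh (latent_field n J g j x) * cosh (latent_field n J g j y)))
    \<le> (\<Prod>j<m. 4 * (cosh (latent_field n J g j (sup x y)) * cosh (latent_field n J g j (inf x y))))"
    using assms by (intro prod_mono) (simp add: cosh_latent_field_le)
  then show "obs_weight n m J h g x * obs_weight n m J h g y
      \<le> obs_weight n m J h g (sup x y) * obs_weight n m J h g (inf x y)"
    unfolding obs_weight_mult h_sum by (intro mult_left_mono) simp_all
qed

lemma obs_weight_strictly_log_supermodular_at:
  assumes "\<And>j. j < m \<Longrightarrow> (\<forall>i<n. 0 \<le> J i j) \<or> (\<forall>i<n. J i j \<le> 0)"
    and "u < n" "v < n" "j < m" "J u j \<noteq> 0" "J v j \<noteq> 0"
  shows "strictly_log_supermodular_at u v (obs_weight n m J h g)"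
  unfolding strictly_log_supermodular_at_def
proof (intro allI impI)
  fix x y :: "nat \<Rightarrow> real"
  assume xy: "x u = 1" "x v = -1" "y u = -1" "y v = 1"
  have h_sum: "(\<Sum>i<n. h i * x i) + (\<Sum>i<n. h i * y i)
      = (\<Sum>i<n. h i * sup x y i) + (\<Sum>i<n. h i * inf x y i)"
    using sum_mult_sup_inf[where a = h and I = "{..<n}" and x = x and y = y] by simp
  have "(\<Prod>j<m. 4 * (cosh (latent_field n J g j x) * cosh (latent_field n J g j y)))
    < (\<Prod>j<m. 4 * (cosh (latent_field n J g j (sup x y)) * cosh (latent_field n J g j (inf x y))))"
    using assms xy
    by (intro prod_mono_strict[of j]) (simp_all add: cosh_latent_field_le cosh_latent_field_less)
  then show "obs_weight n m J h g x * obs_weight n m J h g y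
      < obs_weight n m J h g (sup x y) * obs_weight n m J h g (inf x y)"
    unfolding obs_weight_mult h_sum by (intro mult_strict_left_mono) simp_all
qed

section \<open>The two-hop Markov neighbourhood\<close>

lemma depends_only_on_latent_field: "depends_only_on {i. i < n \<and> J i j \<noteq> 0} (latent_field n J g j)"
  unfolding depends_only_on_def latent_field_def
  by (auto intro!: sum.cong arg_cong2[where f = "(+)"])

lemma obs_weight_factorization:
  assumes "u < n"
  obtains a b where "\<And>x. obs_weight n m J h g x = a x * b x"
    and "depends_only_on (insert u (N2 n m J u)) a" and "depends_only_on (- {u}) b"
proof
  define f where "f j x = 2 * cosh (latent_field n J g j x)" for j x
  show "obs_weight n m J h g x
      = (exp (h u * x u) * (\<Prod>j<m. if J u j = 0 then 1 else f j x))
        * (exp (\<Sum>i\<in>{..<n} - {u}. h i * x i) * (\<Prod>j<m. if J u j = 0 then f j x else 1))" for x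
  proof -
    have "(\<Sum>i<n. h i * x i) = h u * x u + (\<Sum>i\<in>{..<n} - {u}. h i * x i)"
      using assms by (simp add: sum.remove)
    moreover have "(\<Prod>j<m. f j x) = (\<Prod>j<m. if J u j = 0 then 1 else f j x) * (\<Prod>j<m. if J u j = 0 then f j x else 1)"
      unfolding prod.distrib[symmetric] by (rule prod.cong) auto
    ultimately show ?thesis
      by (simp add: obs_weight_def f_def exp_add ac_simps)
  qed
  have f: "f j x = f j y" if "J u j \<noteq> 0" "j < m" "\<forall>i\<in>N2 n m J u. x i = y i" for j x y
  proof -
    have "{i. i < n \<and> J i j \<noteq> 0} \<subseteq> N2 n m J u" using that(1,2) by (auto simp: N2_def)
    then have "latent_field n J g j x = latent_field n J g j y"
      using depends_only_on_mono[OF depends_only_on_latent_field] that(3)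
      unfolding depends_only_on_def by blast
    then show ?thesis by (simp add: f_def)
  qed
  show "depends_only_on (insert u (N2 n m J u)) (\<lambda>x. exp (h u * x u) * (\<Prod>j<m. if J u j = 0 then 1 else f j x))"
    unfolding depends_only_on_def by (auto intro!: prod.cong f)
  have "f j x = f j y" if "J u j = 0" "\<forall>i\<in>- {u}. x i = y i" for j x y
  proof -
    have "{i. i < n \<and> J i j \<noteq> 0} \<subseteq> - {u}" using that(1) by auto
    then have "latent_field n J g j x = latent_field n J g j y"
      using depends_only_on_mono[OF depends_only_on_latent_field] that(2)
      unfolding depends_only_on_def by blast
    then show ?thesis by (simp add: f_def)
  qed
  then show "depends_only_on (- {u}) (\<lambda>x. exp (\<Sum>i\<in>{..<n} - {u}. h i * x i) * (\<Prod>j<m. if J u j = 0 then f j x else 1))"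
    unfolding depends_only_on_def by (auto intro!: prod.cong sum.cong)
qed

lemma obs_cond_indep_outside_N2:
  assumes "u < n" "v < n" "v \<notin> insert u (N2 n m J u)"
  shows "obs_cond_indep n m J h g u v (N2 n m J u - {u})"
proof -
  define W where "W = {..<n} - insert u (insert v (N2 n m J u - {u}))"
  define \<Psi> where "\<Psi> = sum_out W (obs_weight n m J h g)"
  obtain a b where fac: "\<And>x. obs_weight n m J h g x = a x * b x"
    and a: "depends_only_on (insert u (N2 n m J u)) a" and b: "depends_only_on (- {u}) b"
    using obs_weight_factorization[where m = m and J = J and h = h and g = g, OF assms(1)] by blast
  have "insert u (N2 n m J u) \<inter> W = {}" by (auto simp: W_def N2_def)
  moreover have "obs_weight n m J h g = (\<lambda>x. a x * b x)"
    by (simp add: fun_eq_iff fac)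
  ultimately have "sum_out W (obs_weight n m J h g) x = a x * sum_out W b x" for x
    using sum_out_mult_left[OF a] by simp
  moreover have "depends_only_on (- {v}) a"
    using assms(3) by (intro depends_only_on_mono[OF a]) auto
  moreover have "depends_only_on (- {u}) (sum_out W b)"
    using depends_only_on_sum_out[OF _ b, of W] by (auto simp: W_def elim: depends_only_on_mono)
  ultimately have "\<Psi> x * sum_out1 u (sum_out1 v \<Psi>) x = sum_out1 u \<Psi> x * sum_out1 v \<Psi> x" for x
    unfolding \<Psi>_def using assms(3) by (intro odds_ratio_one_of_factorization) auto
  moreover have "N2 n m J u - {u} \<subseteq> {..<n}" by (auto simp: N2_def)
  ultimately show ?thesis
    using assms by (simp add: obs_cond_indep_iff \<Psi>_def W_def)
qed

lemma not_obs_cond_indep_of_shared_latent: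
  assumes "\<And>j. j < m \<Longrightarrow> (\<forall>i<n. 0 \<le> J i j) \<or> (\<forall>i<n. J i j \<le> 0)"
    and "u < n" "w < n" "u \<noteq> w" "j < m" "J u j \<noteq> 0" "J w j \<noteq> 0"
    and "S \<subseteq> {..<n}" "u \<notin> S" "w \<notin> S"
  shows "\<not> obs_cond_indep n m J h g u w S"
proof
  define \<Psi> where "\<Psi> = sum_out ({..<n} - insert u (insert w S)) (obs_weight n m J h g)"
  define x :: "nat \<Rightarrow> real" where "x i = (if i < n then 1 else 0)" for i
  assume "obs_cond_indep n m J h g u w S"
  with assms have "\<Psi> x * sum_out1 u (sum_out1 w \<Psi>) x = sum_out1 u \<Psi> x * sum_out1 w \<Psi> x"
    by (simp add: obs_cond_indep_iff \<Psi>_def x_def spins_def)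
  moreover have "strictly_log_supermodular_at u w \<Psi>"
    unfolding \<Psi>_def using assms
    by (intro strictly_log_supermodular_at_sum_out obs_weight_pos obs_weight_log_supermodular
        obs_weight_strictly_log_supermodular_at) auto
  ultimately show False
    using strict_odds_ratio[of u w \<Psi> x] assms by (simp add: x_def)
qed

theorem mainTheorem4:
  fixes n m :: nat and J :: "nat \<Rightarrow> nat \<Rightarrow> real" and h g :: "nat \<Rightarrow> real"
    and \<alpha> lam :: real and u :: nat
  assumes "locally_consistent n m J h g \<alpha> lam"
    and "\<alpha> > 0"
    and "u < n"
  shows "is_two_hop_markov_nbhd n m J h g u (N2 n m J u - {u})"
proof -
  have signs: "\<And>j. j < m \<Longrightarrow> (\<forall>i<n. 0 \<le> J i j) \<or> (\<forall>i<n. J i j \<le> 0)"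
    using assms(1) by (simp add: locally_consistent_def)
  have "markov_separating n m J h g u (N2 n m J u - {u})"
    using assms(3) obs_cond_indep_outside_N2 by (auto simp: markov_separating_def N2_def)
  moreover have "N2 n m J u - {u} \<subseteq> S" if sep: "markov_separating n m J h g u S" for S
  proof
    fix w assume w: "w \<in> N2 n m J u - {u}"
    then obtain j where "w < n" "j < m" "J w j \<noteq> 0" "J u j \<noteq> 0" by (auto simp: N2_def)
    with sep w assms(3) show "w \<in> S"
      using not_obs_cond_indep_of_shared_latent[where n = n and m = m and J = J and h = h and g = g, OF signs]
      unfolding markov_separating_def by blast
  qed
  ultimately show ?thesis by (auto simp: is_two_hop_markov_nbhd_def)
qed

end
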